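(* (1) For $\eta=n_1\omega_1+\dots+n_r\omega_r\in P^+$, $|\mathcal B^{r-1/2}(\eta)|=\prod_{i=1}^r\left(\binom{2r-1}{i}-\binom{2r-1}{i-2}\right)^{n_i}$. (2) For $\lambda=m_1\omega_1+\dots+m_r\omega_r\in P^+$, $|\mathcal B^{r}(\lambda)|=\prod_{i=1}^r\left(\binom{2r}{i}-\binom{2r}{i-2}\right)^{m_i}$.
   Context: Fix $r\ge1$, $\mathfrak g=\mathfrak{sp}_{2r}$ (matrices with rows/columns indexed $1,\dots,r,-r,\dots,-1$ and $a_{i,j}=-\mathrm{sgn}(i)\mathrm{sgn}(j)a_{-j,-i}$), root vectors $x^-_{i,j-1}=E_{j,i}-E_{-i,-j}$, $x^-_{i,\overline{j}}=E_{-j,i}+E_{-i,j}$ ($1\le i<j\le r$), $x^-_{i,\overline{i}}=E_{-i,i}$; fundamental weights $\omega_i=\varepsilon_1+\dots+\varepsilon_i$, $P^+=\sum\mathbb N\omega_i$; for $\mu=\sum n_i\omega_i$ write $\mu_i=n_i+\dots+n_r$. Binomials $\binom{n}{k}$ with $k<0$ are $0$. For a root vector $x$ and partition $\mathbf s=(\mathbf s(1)\le\dots\le\mathbf s(\ell))\in\mathbb N^\ell$, $\mathbf x(\ell,\mathbf s)=(x\otimes t^{\mathbf s(1)})\cdots(x\otimes t^{\mathbf s(\ell)})\in\mathbf U(\mathfrak g\otimes\mathbb C[t])$ ($=1$ if $\ell=0$); $\mathbf s$ fits into $(\ell,\ell')$ if $\mathbf s(\ell)\le\ell'$. A pattern with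 bounding sequence $\lambda$: integers $\eta^j_i,\lambda^j_i$ ($1\le i\le j\le r$), $\lambda^r_i=\lambda_i$, with $\lambda^j_i\ge\eta^j_i\ge\lambda^j_{i+1}$ ($1\le i\le j\le r$, $\lambda^j_{j+1}=0$) and $\eta^{j+1}_i\ge\lambda^j_i\ge\eta^{j+1}_{i+1}$ ($1\le i\le j<r$). A restricted pattern with bounding sequence $\eta$: integers $\eta^j_i$ ($1\le i\le j\le r$) and $\lambda^j_i$ ($1\le i\le j< r$), $\eta^r_i=\eta_i$, with $\lambda^j_i\ge\eta^j_i\ge\lambda^j_{i+1}$ and $\eta^{j+1}_i\ge\lambda^j_i\ge\eta^{j+1}_{i+1}$ for $1\le i\le j<r$ ($\lambda^j_{j+1}=0$). Differences: $\ell_{i,\overline{j}}=\lambda^j_i-\eta^j_i$, $\ell'_{i,\overline{j}}=\eta^j_i-\lambda^j_{i+1}$, $\ell_{i,j}=\eta^{j+1}_i-\lambda^j_i$, $\ell'_{i,j}=\lambda^j_i-\eta^{j+1}_{i+1}$ (whenever defined). A POP (with bounding sequence $\lambda$) is a pattern plus partitions $\mathbf s_{i,\overline j}$ fitting $(\ell_{i,\overline j},\ell'_{i,\overline j})$ for $1\le i\le j\le r$ and $\mathbf s_{i,j}$ fitting $(\ell_{i,j},\ell'_{i,j})$ for $1\le i\le j<r$; a restricted POP (with bounding sequence $\eta$) is a restricted pattern plus such partitions $\mathbf s_{i,\overline j},\mathbf s_{i,j}$ for $1\le i\le j<r$. Put $X_{\overline j}=\prod_{i=1}^{j}\mathbf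 x^-_{i,\overline j}(\ell_{i,\overline j},\mathbf s_{i,\overline j})$, $X_j=\prod_{i=1}^{j}\mathbf x^-_{i,j}(\ell_{i,j},\mathbf s_{i,j})$ (increasing $i$). $\mathcal B^r(\lambda)$ is the set of elements $X_{\overline1}X_1\cdots X_{\overline{r-1}}X_{r-1}X_{\overline r}$ over POPs with bounding sequence $\lambda$, and $\mathcal B^{r-1/2}(\eta)$ the set of elements $X_{\overline1}X_1\cdots X_{\overline{r-1}}X_{r-1}$ over restricted POPs with bounding sequence $\eta$. *)

theory Defs
  imports Main
begin

text \<open>Labels of the negative root vectors of sp_2r:
  RBar i j  stands for  x^-_{i,bar j}  (1 <= i <= j <= r),
  RPl i j   stands for  x^-_{i,j}      (1 <= i <= j < r), i.e. E_{j+1,i} - E_{-i,-(j+1)}.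
  A letter (x, k) stands for the element x \<otimes> t^k of g \<otimes> C[t].\<close>
datatype root = RBar nat nat | RPl nat nat

type_synonym letter = "root \<times> nat"

text \<open>Bounding sequence of mu = sum n_i omega_i : mu_i = n_i + ... + n_r.\<close>
definition bseq :: "nat \<Rightarrow> (nat \<Rightarrow> nat) \<Rightarrow> nat \<Rightarrow> int" where
  "bseq r n i = (\<Sum>k=i..r. int (n k))"

definition binomz :: "nat \<Rightarrow> int \<Rightarrow> int" where
  "binomz n k = (if k < 0 then 0 else int (n choose nat k))"

text \<open>Patterns: eta j i = eta^j_i, lam j i = lambda^j_i; lambda^j_{j+1} = 0.\<close>
definition lamx :: "(nat \<Rightarrow> nat \<Rightarrow> int) \<Rightarrow> nat \<Rightarrow> nat \<Rightarrow> int" where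
  "lamx lam j k = (if k = j + 1 then 0 else lam j k)"

definition interlace1 :: "nat \<Rightarrow> (nat \<Rightarrow> nat \<Rightarrow> int) \<Rightarrow> (nat \<Rightarrow> nat \<Rightarrow> int) \<Rightarrow> bool" where
  "interlace1 j eta lam \<longleftrightarrow>
     (\<forall>i\<in>{1..j}. lam j i \<ge> eta j i \<and> eta j i \<ge> lamx lam j (i+1))"

definition interlace2 :: "nat \<Rightarrow> (nat \<Rightarrow> nat \<Rightarrow> int) \<Rightarrow> (nat \<Rightarrow> nat \<Rightarrow> int) \<Rightarrow> bool" where
  "interlace2 j eta lam \<longleftrightarrow>
     (\<forall>i\<in>{1..j}. eta (Suc j) i \<ge> lam j i \<and> lam j i \<ge> eta (Suc j) (i+1))"

definition is_pattern ::
  "nat \<Rightarrow> (nat \<Rightarrow> int) \<Rightarrow> (nat \<Rightarrow> nat \<Rightarrow> int) \<Rightarrow> (nat \<Rightarrow> nat \<Rightarrow> int) \<Rightarrow> bool" where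
  "is_pattern r bnd eta lam \<longleftrightarrow>
     (\<forall>i\<in>{1..r}. lam r i = bnd i) \<and>
     (\<forall>j\<in>{1..r}. interlace1 j eta lam) \<and>
     (\<forall>j\<in>{1..<r}. interlace2 j eta lam)"

definition is_rpattern ::
  "nat \<Rightarrow> (nat \<Rightarrow> int) \<Rightarrow> (nat \<Rightarrow> nat \<Rightarrow> int) \<Rightarrow> (nat \<Rightarrow> nat \<Rightarrow> int) \<Rightarrow> bool" where
  "is_rpattern r bnd eta lam \<longleftrightarrow>
     (\<forall>i\<in>{1..r}. eta r i = bnd i) \<and>
     (\<forall>j\<in>{1..<r}. interlace1 j eta lam) \<and>
     (\<forall>j\<in>{1..<r}. interlace2 j eta lam)"

definition lbar :: "_ \<Rightarrow> _ \<Rightarrow> nat \<Rightarrow> nat \<Rightarrow> int" where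
  "lbar eta lam j i = lam j i - eta j i"
definition lbar' :: "_ \<Rightarrow> _ \<Rightarrow> nat \<Rightarrow> nat \<Rightarrow> int" where
  "lbar' eta lam j i = eta j i - lamx lam j (i+1)"
definition lpl :: "_ \<Rightarrow> _ \<Rightarrow> nat \<Rightarrow> nat \<Rightarrow> int" where
  "lpl eta lam j i = eta (Suc j) i - lam j i"
definition lpl' :: "_ \<Rightarrow> _ \<Rightarrow> nat \<Rightarrow> nat \<Rightarrow> int" where
  "lpl' eta lam j i = lam j i - eta (Suc j) (i+1)"

definition fits :: "nat list \<Rightarrow> int \<Rightarrow> int \<Rightarrow> bool" where
  "fits s l l' \<longleftrightarrow> int (length s) = l \<and> sorted s \<and> (\<forall>e\<in>set s. int e \<le> l')"

definition fitsBar where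
  "fitsBar eta lam sb j \<longleftrightarrow> (\<forall>i\<in>{1..j}. fits (sb j i) (lbar eta lam j i) (lbar' eta lam j i))"
definition fitsPl where
  "fitsPl eta lam s j \<longleftrightarrow> (\<forall>i\<in>{1..j}. fits (s j i) (lpl eta lam j i) (lpl' eta lam j i))"

definition is_POP where
  "is_POP r bnd eta lam sb s \<longleftrightarrow> is_pattern r bnd eta lam \<and>
     (\<forall>j\<in>{1..r}. fitsBar eta lam sb j) \<and> (\<forall>j\<in>{1..<r}. fitsPl eta lam s j)"

definition is_rPOP where
  "is_rPOP r bnd eta lam sb s \<longleftrightarrow> is_rpattern r bnd eta lam \<and>
     (\<forall>j\<in>{1..<r}. fitsBar eta lam sb j) \<and> (\<forall>j\<in>{1..<r}. fitsPl eta lam s j)"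

text \<open>The monomials, as formal (ordered) words of letters x \<otimes> t^k.
  x(l,s) = (x\<otimes>t^{s(1)})...(x\<otimes>t^{s(l)}); X_{bar j}, X_j are products over increasing i.\<close>
definition xmon :: "root \<Rightarrow> nat list \<Rightarrow> letter list" where
  "xmon x s = map (\<lambda>k. (x, k)) s"

definition Xbar :: "(nat \<Rightarrow> nat \<Rightarrow> nat list) \<Rightarrow> nat \<Rightarrow> letter list" where
  "Xbar sb j = concat (map (\<lambda>i. xmon (RBar i j) (sb j i)) [1..<Suc j])"

definition Xpl :: "(nat \<Rightarrow> nat \<Rightarrow> nat list) \<Rightarrow> nat \<Rightarrow> letter list" where
  "Xpl s j = concat (map (\<lambda>i. xmon (RPl i j) (s j i)) [1..<Suc j])"

definition wordHalf :: "nat \<Rightarrow> _ \<Rightarrow> _ \<Rightarrow> letter list" where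
  "wordHalf r sb s = concat (map (\<lambda>j. Xbar sb j @ Xpl s j) [1..<r])"

definition wordFull :: "nat \<Rightarrow> _ \<Rightarrow> _ \<Rightarrow> letter list" where
  "wordFull r sb s = wordHalf r sb s @ Xbar sb r"

definition Bfull :: "nat \<Rightarrow> (nat \<Rightarrow> nat) \<Rightarrow> letter list set" where
  "Bfull r m = {wordFull r sb s | eta lam sb s. is_POP r (bseq r m) eta lam sb s}"

definition Bhalf :: "nat \<Rightarrow> (nat \<Rightarrow> nat) \<Rightarrow> letter list set" where
  "Bhalf r n = {wordHalf r sb s | eta lam sb s. is_rPOP r (bseq r n) eta lam sb s}"

end

(* Read a POP from its top row downwards. Below a row T of length n with gaps
   d_i = T_i - T_(i+1) (where T_(n+1) = 0), the next row B together with the partitions between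
   the two rows amounts to an independent choice, for every i, of a partition fitting into an
   (l_i, d_i - l_i) box for some l_i <= d_i; then B_i = T_i - l_i. For fixed l_i there are
   binom d_i l_i such partitions, and the gaps of B are d_i - l_i + l_(i+1). Hence if the
   patterns below a row with gaps e are counted by prod_i c_i^e_i, those below T are counted by
   prod_i sum_l binom d_i l c_i^(d_i - l) c_(i-1)^l = prod_i (c_i + c_(i-1))^d_i, with c_0 = 1.
   By Pascal's rule for c_i = binom k i - binom k (i - 2) each interlacing step raises k by one,
   and an induction over the 2r - 2 resp. 2r - 1 steps gives the formula. Distinct POPs give
   distinct monomials because the roots determine from which step and which i a letter comes. *)
theory Submission
  imports Defs "HOL-Library.FuncSet" "HOL-Library.Multiset"
begin

section \<open>Partitions in a box\<close>

definition box_partitions :: "nat \<Rightarrow> nat \<Rightarrow> nat list set" where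
  "box_partitions k m = {xs. sorted xs \<and> length xs = k \<and> (\<forall>e\<in>set xs. e \<le> m)}"

definition fitting_partitions :: "nat \<Rightarrow> nat list set" where
  "fitting_partitions d = (\<Union>k\<in>{0..d}. box_partitions k (d - k))"

lemma mem_fitting_partitions:
  "xs \<in> fitting_partitions d \<longleftrightarrow> sorted xs \<and> length xs \<le> d \<and> (\<forall>e\<in>set xs. e \<le> d - length xs)"
  by (auto simp: fitting_partitions_def box_partitions_def)

lemma finite_box_partitions: "finite (box_partitions k m)"
proof (rule finite_subset)
  show "box_partitions k m \<subseteq> {xs. set xs \<subseteq> {0..m} \<and> length xs \<le> k}"
    by (auto simp: box_partitions_def)
qed (rule finite_lists_length_le, simp)

lemma finite_fitting_partitions: "finite (fitting_partitions d)"
  by (simp add: fitting_partitions_def finite_box_partitions)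

lemma card_box_partitions: "card (box_partitions k m) = (m + k) choose k"
proof -
  have "bij_betw mset (box_partitions k m) (multisets_of_size {0..m} k)"
  proof (rule bij_betw_byWitness[where f' = sorted_list_of_multiset])
    show "\<forall>xs\<in>box_partitions k m. sorted_list_of_multiset (mset xs) = xs"
      by (auto simp: box_partitions_def sorted_sort_id)
    show "mset ` box_partitions k m \<subseteq> multisets_of_size {0..m} k"
      by (auto simp: box_partitions_def multisets_of_size_def)
    show "sorted_list_of_multiset ` multisets_of_size {0..m} k \<subseteq> box_partitions k m"
      by (auto simp: box_partitions_def multisets_of_size_def)
         (metis mset_sorted_list_of_multiset size_mset)
  qed simp
  then have "card (box_partitions k m) = card (multisets_of_size {0..m} k)"
    by (rule bij_betw_same_card)
  then show ?thesis by (simp add: card_multisets_of_size)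
qed

lemma sum_fitting_partitions_binomial:
  fixes a b :: "'a::comm_semiring_1"
  shows "(\<Sum>xs\<in>fitting_partitions d. a ^ (d - length xs) * b ^ length xs) = (a + b) ^ d"
proof -
  have "(\<Sum>xs\<in>fitting_partitions d. a ^ (d - length xs) * b ^ length xs)
      = (\<Sum>k=0..d. \<Sum>xs\<in>box_partitions k (d - k). a ^ (d - length xs) * b ^ length xs)"
    unfolding fitting_partitions_def
    by (rule sum.UNION_disjoint) (simp_all add: finite_box_partitions, auto simp: box_partitions_def)
  also have "\<dots> = (\<Sum>k=0..d. \<Sum>xs\<in>box_partitions k (d - k). a ^ (d - k) * b ^ k)"
    by (intro sum.cong refl) (auto simp: box_partitions_def)
  also have "\<dots> = (\<Sum>k=0..d. of_nat (d choose k) * (a ^ (d - k) * b ^ k))"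
    by (simp add: card_box_partitions)
  also have "\<dots> = (a + b) ^ d"
    by (subst add.commute) (simp add: binomial_ring atLeast0AtMost mult_ac)
  finally show ?thesis .
qed

lemma sum_PiE_fitting_partitions_binomial:
  fixes a b :: "nat \<Rightarrow> 'a::comm_semiring_1"
  assumes "finite I"
  shows "(\<Sum>Q\<in>PiE I (\<lambda>i. fitting_partitions (D i)).
            \<Prod>i\<in>I. a i ^ (D i - length (Q i)) * b i ^ length (Q i))
       = (\<Prod>i\<in>I. (a i + b i) ^ D i)"
  using prod_sum_PiE[OF assms, of "\<lambda>i. fitting_partitions (D i)"
      "\<lambda>i xs. a i ^ (D i - length xs) * b i ^ length xs"]
  by (simp add: finite_fitting_partitions sum_fitting_partitions_binomial)

section \<open>Interlacing rows\<close>

definition row_pad :: "nat \<Rightarrow> (nat \<Rightarrow> int) \<Rightarrow> nat \<Rightarrow> int" where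
  "row_pad n f k = (if k = Suc n then 0 else f k)"

definition dominant_row :: "nat \<Rightarrow> (nat \<Rightarrow> int) \<Rightarrow> bool" where
  "dominant_row n f \<longleftrightarrow> (\<forall>i\<in>{1..n}. row_pad n f (Suc i) \<le> f i)"

definition row_gap :: "nat \<Rightarrow> (nat \<Rightarrow> int) \<Rightarrow> nat \<Rightarrow> nat" where
  "row_gap n f i = nat (f i - row_pad n f (Suc i))"

(* Both kinds of interlacing in a pattern are instances: (lambda^j, eta^j) with n = m = j,
   and (eta^(j+1), lambda^j) with n = j + 1 and m = j. *)
definition interlaced_step ::
  "nat \<Rightarrow> nat \<Rightarrow> (nat \<Rightarrow> int) \<Rightarrow> (nat \<Rightarrow> int) \<Rightarrow> (nat \<Rightarrow> nat list) \<Rightarrow> bool" where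
  "interlaced_step n m T B P \<longleftrightarrow>
     (\<forall>i\<in>{1..m}. B i \<le> T i \<and> row_pad n T (Suc i) \<le> B i \<and>
        fits (P i) (T i - B i) (B i - row_pad n T (Suc i)))"

lemma fits_between_iff:
  "(B \<le> T \<and> c \<le> B \<and> fits P (T - B) (B - c)) \<longleftrightarrow>
   (c \<le> T \<and> P \<in> fitting_partitions (nat (T - c)) \<and> B = T - int (length P))"
proof
  assume h: "B \<le> T \<and> c \<le> B \<and> fits P (T - B) (B - c)"
  then have len: "int (length P) = T - B" and entries: "\<forall>e\<in>set P. int e \<le> B - c"
    by (auto simp: fits_def)
  have "\<forall>e\<in>set P. e \<le> nat (T - c) - length P"
    using entries len h by auto
  with h len show "c \<le> T \<and> P \<in> fitting_partitions (nat (T - c)) \<and> B = T - int (length P)"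
    by (auto simp: fits_def mem_fitting_partitions)
next
  assume h: "c \<le> T \<and> P \<in> fitting_partitions (nat (T - c)) \<and> B = T - int (length P)"
  then have len: "length P \<le> nat (T - c)" and entries: "\<forall>e\<in>set P. e \<le> nat (T - c) - length P"
    by (auto simp: mem_fitting_partitions)
  have "\<forall>e\<in>set P. int e \<le> B - c"
    using entries len h by auto
  with h len show "B \<le> T \<and> c \<le> B \<and> fits P (T - B) (B - c)"
    by (auto simp: fits_def mem_fitting_partitions)
qed

lemma interlaced_step_iff:
  assumes "dominant_row n T" "m \<le> n"
  shows "interlaced_step n m T B P \<longleftrightarrow>
    (\<forall>i\<in>{1..m}. P i \<in> fitting_partitions (row_gap n T i) \<and> B i = T i - int (length (P i)))"
proof -
  have "row_pad n T (Suc i) \<le> T i" if "i \<in> {1..m}" for i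
    using assms that by (auto simp: dominant_row_def)
  then show ?thesis
    unfolding interlaced_step_def row_gap_def using fits_between_iff by blast
qed

lemma interlaced_step_cong:
  assumes "m \<le> n" "\<forall>i\<in>{1..n}. T' i = T i"
  shows "interlaced_step n m T' B P = interlaced_step n m T B P"
proof -
  have "row_pad n T' (Suc i) = row_pad n T (Suc i) \<and> T' i = T i" if "i \<in> {1..m}" for i
    using assms that by (auto simp: row_pad_def)
  then show ?thesis by (simp add: interlaced_step_def)
qed

lemma row_pad_nonneg:
  assumes "m \<le> n" "n \<le> Suc m" "dominant_row n T"
  shows "0 \<le> row_pad n T (Suc m)"
proof (cases "n = m")
  case False
  then have "n = Suc m" using assms(1,2) by simp
  then show ?thesis
    using assms(3) unfolding dominant_row_def by (force simp: row_pad_def)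
qed (simp add: row_pad_def)

lemma row_pad_remove:
  assumes "m \<le> n" "i \<in> {1..m}"
  shows "(T i - int (length (Q i))) - row_pad m (\<lambda>i. T i - int (length (Q i))) (Suc i)
       = (T i - row_pad n T (Suc i)) - int (length (Q i)) +
         (if i < m then int (length (Q (Suc i))) else row_pad n T (Suc m))"
  using assms by (auto simp: row_pad_def)

lemma prod_power_shift:
  fixes c :: "nat \<Rightarrow> 'a::comm_monoid_mult"
  assumes "c 0 = 1"
  shows "(\<Prod>i=1..m. c i ^ K (Suc i)) = (\<Prod>i=1..m. c (i - 1) ^ K i) * c m ^ K (Suc m)"
proof (induction m)
  case (Suc m)
  then show ?case by (simp add: prod.cl_ivl_Suc mult_ac)
qed (simp add: assms)

context
  fixes n m :: nat and T :: "nat \<Rightarrow> int" and Q :: "nat \<Rightarrow> nat list"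
  assumes row_lengths: "m \<le> n" "n \<le> Suc m"
    and dominant: "dominant_row n T"
    and Q: "Q \<in> PiE {1..m} (\<lambda>i. fitting_partitions (row_gap n T i))"
begin

private lemma length_le_row_gap: "i \<in> {1..m} \<Longrightarrow> int (length (Q i)) \<le> T i - row_pad n T (Suc i)"
proof -
  assume i: "i \<in> {1..m}"
  then have "length (Q i) \<le> row_gap n T i"
    using Q by (auto simp: mem_fitting_partitions)
  moreover have "row_pad n T (Suc i) \<le> T i"
    using dominant i row_lengths by (auto simp: dominant_row_def)
  ultimately show ?thesis by (simp add: row_gap_def)
qed

lemma dominant_row_remove: "dominant_row m (\<lambda>i. T i - int (length (Q i)))"
  unfolding dominant_row_def
proof
  fix i assume i: "i \<in> {1..m}"
  show "row_pad m (\<lambda>i. T i - int (length (Q i))) (Suc i) \<le> T i - int (length (Q i))"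
    using row_pad_remove[OF row_lengths(1) i, of T Q] length_le_row_gap[OF i]
      row_pad_nonneg[OF row_lengths dominant]
    by (simp split: if_splits)
qed

lemma row_gap_remove:
  assumes "i \<in> {1..m}"
  shows "row_gap m (\<lambda>i. T i - int (length (Q i))) i
       = row_gap n T i - length (Q i) + (if i < m then length (Q (Suc i)) else nat (row_pad n T (Suc m)))"
  using row_pad_remove[OF row_lengths(1) assms, of T Q] length_le_row_gap[OF assms]
    row_pad_nonneg[OF row_lengths dominant]
  unfolding row_gap_def by auto

lemma prod_power_row_gap_remove:
  fixes c :: "nat \<Rightarrow> 'a::comm_monoid_mult"
  assumes "c 0 = 1"
  shows "(\<Prod>i=1..m. c i ^ row_gap m (\<lambda>i. T i - int (length (Q i))) i)
       = (\<Prod>i=1..m. c i ^ (row_gap n T i - length (Q i)) * c (i - 1) ^ length (Q i))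
         * c m ^ nat (row_pad n T (Suc m))"
proof -
  define K where "K i = (if i \<le> m then length (Q i) else nat (row_pad n T (Suc m)))" for i
  have "(\<Prod>i=1..m. c i ^ row_gap m (\<lambda>i. T i - int (length (Q i))) i)
      = (\<Prod>i=1..m. c i ^ (row_gap n T i - length (Q i)) * c i ^ K (Suc i))"
    by (intro prod.cong refl) (auto simp: row_gap_remove K_def power_add)
  also have "\<dots> = (\<Prod>i=1..m. c i ^ (row_gap n T i - length (Q i)))
      * ((\<Prod>i=1..m. c (i - 1) ^ K i) * c m ^ K (Suc m))"
    by (simp only: prod.distrib prod_power_shift[where c = c, OF assms])
  also have "(\<Prod>i=1..m. c (i - 1) ^ K i) = (\<Prod>i=1..m. c (i - 1) ^ length (Q i))"
    by (intro prod.cong) (auto simp: K_def)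
  finally show ?thesis by (simp add: prod.distrib K_def mult.assoc)
qed

end

lemma sum_prod_power_row_gap_remove:
  fixes c :: "nat \<Rightarrow> 'a::comm_semiring_1"
  assumes row_lengths: "m \<le> n" "n \<le> Suc m" and dominant: "dominant_row n T"
    and "c 0 = 1" and top: "n = Suc m \<Longrightarrow> c n = 0"
  shows "(\<Sum>Q\<in>PiE {1..m} (\<lambda>i. fitting_partitions (row_gap n T i)).
            \<Prod>i=1..m. c i ^ row_gap m (\<lambda>i. T i - int (length (Q i))) i)
       = (\<Prod>i=1..n. (c i + c (i - 1)) ^ row_gap n T i)"
proof -
  have "(\<Sum>Q\<in>PiE {1..m} (\<lambda>i. fitting_partitions (row_gap n T i)).
            \<Prod>i=1..m. c i ^ row_gap m (\<lambda>i. T i - int (length (Q i))) i)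
      = (\<Sum>Q\<in>PiE {1..m} (\<lambda>i. fitting_partitions (row_gap n T i)).
            \<Prod>i=1..m. c i ^ (row_gap n T i - length (Q i)) * c (i - 1) ^ length (Q i))
         * c m ^ nat (row_pad n T (Suc m))"
    unfolding sum_distrib_right
    by (intro sum.cong refl prod_power_row_gap_remove[where c = c, OF row_lengths dominant _ assms(4)])
  also have "\<dots> = (\<Prod>i=1..m. (c i + c (i - 1)) ^ row_gap n T i) * c m ^ nat (row_pad n T (Suc m))"
    by (simp add: sum_PiE_fitting_partitions_binomial)
  also have "\<dots> = (\<Prod>i=1..n. (c i + c (i - 1)) ^ row_gap n T i)"
  proof (cases "n = m")
    case False
    then have n: "n = Suc m" using row_lengths by simp
    then show ?thesis using top[OF n] by (simp add: prod.cl_ivl_Suc row_gap_def row_pad_def)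
  qed (simp add: row_pad_def)
  finally show ?thesis .
qed

section \<open>Staircases and their words\<close>

definition row_len :: "nat \<Rightarrow> nat" where
  "row_len k = Suc k div 2"

(* The rows R 1, R 2, R 3, ... stand for eta^1, lambda^1, eta^2, ... (see interleave below);
   row k has row_len k entries, and P k holds the partitions between the rows Suc k and k. *)
definition staircase ::
  "nat \<Rightarrow> (nat \<Rightarrow> int) \<Rightarrow> (nat \<Rightarrow> nat \<Rightarrow> int) \<Rightarrow> (nat \<Rightarrow> nat \<Rightarrow> nat list) \<Rightarrow> bool" where
  "staircase k T R P \<longleftrightarrow> (\<forall>i\<in>{1..row_len k}. R k i = T i) \<and>
     (\<forall>k'\<in>{1..<k}. interlaced_step (row_len (Suc k')) (row_len k') (R (Suc k')) (R k') (P k'))"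

lemma row_len_Suc: "row_len k \<le> row_len (Suc k)" "row_len (Suc k) \<le> Suc (row_len k)"
  by (simp_all add: row_len_def)

lemma staircase_Suc_iff:
  assumes "1 \<le> k" "dominant_row (row_len (Suc k)) T"
  shows "staircase (Suc k) T R P \<longleftrightarrow>
    (\<forall>i\<in>{1..row_len (Suc k)}. R (Suc k) i = T i) \<and>
    (\<forall>i\<in>{1..row_len k}. P k i \<in> fitting_partitions (row_gap (row_len (Suc k)) T i)) \<and>
    staircase k (\<lambda>i. T i - int (length (P k i))) R P"
proof -
  have steps: "{1..<Suc k} = insert k {1..<k}" using assms(1) by auto
  have "interlaced_step (row_len (Suc k)) (row_len k) (R (Suc k)) (R k) (P k) \<longleftrightarrow>
    (\<forall>i\<in>{1..row_len k}. P k i \<in> fitting_partitions (row_gap (row_len (Suc k)) T i) \<and>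
       R k i = T i - int (length (P k i)))"
    if "\<forall>i\<in>{1..row_len (Suc k)}. R (Suc k) i = T i"
    using interlaced_step_cong[OF row_len_Suc(1) that] interlaced_step_iff[OF assms(2) row_len_Suc(1)]
    by simp
  then show ?thesis
    unfolding staircase_def steps by auto
qed

definition root_at :: "nat \<Rightarrow> nat \<Rightarrow> root" where
  "root_at k i = (if odd k then RBar i (row_len k) else RPl i (row_len k))"

fun level :: "root \<Rightarrow> nat" where
  "level (RBar i j) = 2 * j - 1"
| "level (RPl i j) = 2 * j"

lemma level_root_at [simp]: "level (root_at k i) = k"
  by (auto simp: root_at_def row_len_def elim: oddE)

definition block :: "nat \<Rightarrow> (nat \<Rightarrow> nat list) \<Rightarrow> letter list" where
  "block k p = concat (map (\<lambda>i. xmon (root_at k i) (p i)) [1..<Suc (row_len k)])"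

definition staircase_word :: "nat \<Rightarrow> (nat \<Rightarrow> nat \<Rightarrow> nat list) \<Rightarrow> letter list" where
  "staircase_word k P = concat (map (\<lambda>k'. block k' (P k')) [1..<k])"

lemma staircase_word_Suc: "1 \<le> k \<Longrightarrow> staircase_word (Suc k) P = staircase_word k P @ block k (P k)"
  by (simp add: staircase_word_def)

lemma block_cong: "(\<And>i. i \<in> {1..row_len k} \<Longrightarrow> p' i = p i) \<Longrightarrow> block k p' = block k p"
  unfolding block_def by (intro arg_cong[where f = concat] map_cong) auto

lemma staircase_word_cong:
  "(\<And>k'. k' < k \<Longrightarrow> P' k' = P k') \<Longrightarrow> staircase_word k P' = staircase_word k P"
  unfolding staircase_word_def by (intro arg_cong[where f = concat] map_cong) auto

lemma level_staircase_word: "c \<in> set (staircase_word k P) \<Longrightarrow> level (fst c) < k"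
  by (auto simp: staircase_word_def block_def xmon_def)

lemma filter_concat_xmon:
  assumes "distinct xs" "inj_on f (set xs)" "i \<in> set xs"
  shows "map snd (filter (\<lambda>c. fst c = f i) (concat (map (\<lambda>i'. xmon (f i') (p i')) xs))) = p i"
  using assms
proof (induction xs)
  case (Cons i' xs)
  have "map snd (filter (\<lambda>c. fst c = f i) (xmon (f i') (p i'))) = (if i' = i then p i else [])"
    using Cons.prems by (cases "i' = i") (auto simp: xmon_def filter_map comp_def inj_on_def)
  moreover have "filter (\<lambda>c. fst c = f i) (concat (map (\<lambda>i'. xmon (f i') (p i')) xs)) = []"
    if "i = i'"
    using Cons.prems that by (auto simp: xmon_def filter_empty_conv inj_on_def)
  ultimately show ?case using Cons by auto
qed simp

lemma block_extract:
  assumes "\<forall>c\<in>set w. level (fst c) < k" "i \<in> {1..row_len k}"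
  shows "map snd (filter (\<lambda>c. fst c = root_at k i) (w @ block k p)) = p i"
proof -
  have "filter (\<lambda>c. fst c = root_at k i) w = []"
    using assms(1) by (auto simp: filter_empty_conv)
  moreover have "inj_on (root_at k) (set [1..<Suc (row_len k)])"
    by (auto simp: inj_on_def root_at_def)
  ultimately show ?thesis
    using filter_concat_xmon[of "[1..<Suc (row_len k)]" "root_at k" i p] assms(2)
    by (simp add: block_def del: upt_Suc)
qed

lemma append_block_eq_imp_eq:
  assumes "w @ block k Q = w' @ block k Q'"
    and "\<forall>c\<in>set w. level (fst c) < k" "\<forall>c\<in>set w'. level (fst c) < k"
    and "Q \<in> PiE {1..row_len k} B" "Q' \<in> PiE {1..row_len k} B"
  shows "Q = Q'"
proof (rule PiE_ext[OF assms(4,5)])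
  fix i assume "i \<in> {1..row_len k}"
  then show "Q i = Q' i"
    using block_extract[OF assms(2), of i Q] block_extract[OF assms(3), of i Q'] assms(1) by simp
qed

definition staircase_words :: "nat \<Rightarrow> (nat \<Rightarrow> int) \<Rightarrow> letter list set" where
  "staircase_words k T = {staircase_word k P | R P. staircase k T R P}"

lemma level_staircase_words: "w \<in> staircase_words k T \<Longrightarrow> \<forall>c\<in>set w. level (fst c) < k"
  by (auto simp: staircase_words_def dest: level_staircase_word)

lemma staircase_words_1: "staircase_words 1 T = {[]}"
proof -
  have "staircase 1 T (\<lambda>_. T) P" for P
    by (simp add: staircase_def)
  then show ?thesis
    by (auto simp: staircase_words_def staircase_word_def)
qed

lemma staircase_words_Suc:
  assumes "1 \<le> k" "dominant_row (row_len (Suc k)) T"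
  shows "staircase_words (Suc k) T =
    (\<Union>Q\<in>PiE {1..row_len k} (\<lambda>i. fitting_partitions (row_gap (row_len (Suc k)) T i)).
       (\<lambda>w. w @ block k Q) ` staircase_words k (\<lambda>i. T i - int (length (Q i))))"
    (is "_ = (\<Union>Q\<in>?Q. ?W Q)")
proof (intro equalityI subsetI)
  fix w assume "w \<in> staircase_words (Suc k) T"
  then obtain R P where w: "w = staircase_word (Suc k) P" and RP: "staircase (Suc k) T R P"
    unfolding staircase_words_def by blast
  define Q where "Q = restrict (P k) {1..row_len k}"
  have Q_eq: "\<forall>i\<in>{1..row_len k}. Q i = P k i" by (simp add: Q_def)
  have below: "staircase k (\<lambda>i. T i - int (length (P k i))) R P"
    using RP unfolding staircase_Suc_iff[OF assms] by blast
  from RP have "Q \<in> ?Q"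
    unfolding staircase_Suc_iff[OF assms] Q_def by (auto simp: restrict_PiE_iff)
  moreover have "staircase k (\<lambda>i. T i - int (length (Q i))) R P"
    using below Q_eq by (simp add: staircase_def)
  moreover have "w = staircase_word k P @ block k Q"
    using w assms(1) block_cong[of k Q "P k"] Q_eq by (simp add: staircase_word_Suc)
  ultimately show "w \<in> (\<Union>Q\<in>?Q. ?W Q)"
    unfolding staircase_words_def by blast
next
  fix w assume "w \<in> (\<Union>Q\<in>?Q. ?W Q)"
  then obtain Q R P where Q: "Q \<in> ?Q" and RP: "staircase k (\<lambda>i. T i - int (length (Q i))) R P"
    and w: "w = staircase_word k P @ block k Q"
    unfolding staircase_words_def by blast
  define R' where "R' = R(Suc k := T)"
  define P' where "P' = P(k := Q)"
  have "staircase k (\<lambda>i. T i - int (length (P' k i))) R' P'"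
    using RP unfolding staircase_def R'_def P'_def by simp
  then have "staircase (Suc k) T R' P'"
    using Q unfolding staircase_Suc_iff[OF assms] by (auto simp: R'_def P'_def)
  moreover have "staircase_word k P' = staircase_word k P"
    by (rule staircase_word_cong) (simp add: P'_def)
  with w assms(1) have "w = staircase_word (Suc k) P'"
    by (simp add: staircase_word_Suc P'_def)
  ultimately show "w \<in> staircase_words (Suc k) T"
    unfolding staircase_words_def by blast
qed

section \<open>Counting staircases\<close>

lemma card_UN_image_append:
  assumes "finite I" "\<And>Q. Q \<in> I \<Longrightarrow> finite (W Q)"
    and distinct: "\<And>Q Q' w w'. Q \<in> I \<Longrightarrow> Q' \<in> I \<Longrightarrow> w \<in> W Q \<Longrightarrow> w' \<in> W Q' \<Longrightarrow>
      w @ s Q = w' @ s Q' \<Longrightarrow> Q = Q'"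
  shows "finite (\<Union>Q\<in>I. (\<lambda>w. w @ s Q) ` W Q) \<and>
    card (\<Union>Q\<in>I. (\<lambda>w. w @ s Q) ` W Q) = (\<Sum>Q\<in>I. card (W Q))"
proof
  show "finite (\<Union>Q\<in>I. (\<lambda>w. w @ s Q) ` W Q)" using assms(1,2) by simp
  have "card (\<Union>Q\<in>I. (\<lambda>w. w @ s Q) ` W Q) = (\<Sum>Q\<in>I. card ((\<lambda>w. w @ s Q) ` W Q))"
    using assms(1,2) by (intro card_UN_disjoint) (auto dest: distinct)
  also have "\<dots> = (\<Sum>Q\<in>I. card (W Q))"
    by (intro sum.cong refl card_image) (simp add: inj_on_def)
  finally show "card (\<Union>Q\<in>I. (\<lambda>w. w @ s Q) ` W Q) = (\<Sum>Q\<in>I. card (W Q))" .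
qed

lemma card_staircase_words_Suc:
  assumes "1 \<le> k" "dominant_row (row_len (Suc k)) T"
    and "\<And>Q. Q \<in> PiE {1..row_len k} (\<lambda>i. fitting_partitions (row_gap (row_len (Suc k)) T i)) \<Longrightarrow>
      finite (staircase_words k (\<lambda>i. T i - int (length (Q i))))"
  shows "finite (staircase_words (Suc k) T) \<and>
    card (staircase_words (Suc k) T) =
      (\<Sum>Q\<in>PiE {1..row_len k} (\<lambda>i. fitting_partitions (row_gap (row_len (Suc k)) T i)).
         card (staircase_words k (\<lambda>i. T i - int (length (Q i)))))"
  unfolding staircase_words_Suc[OF assms(1,2)]
proof (rule card_UN_image_append)
  show "finite (PiE {1..row_len k} (\<lambda>i. fitting_partitions (row_gap (row_len (Suc k)) T i)))"
    by (simp add: finite_PiE finite_fitting_partitions)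
next
  fix Q Q' w w'
  assume "Q \<in> PiE {1..row_len k} (\<lambda>i. fitting_partitions (row_gap (row_len (Suc k)) T i))"
    "Q' \<in> PiE {1..row_len k} (\<lambda>i. fitting_partitions (row_gap (row_len (Suc k)) T i))"
    and w: "w \<in> staircase_words k (\<lambda>i. T i - int (length (Q i)))"
      "w' \<in> staircase_words k (\<lambda>i. T i - int (length (Q' i)))"
    and "w @ block k Q = w' @ block k Q'"
  then show "Q = Q'"
    using append_block_eq_imp_eq level_staircase_words[OF w(1)] level_staircase_words[OF w(2)]
    by blast
qed (rule assms(3))

definition binom_diff :: "nat \<Rightarrow> nat \<Rightarrow> int" where
  "binom_diff k i = binomz k (int i) - binomz k (int i - 2)"

lemma binomz_Suc: "binomz (Suc n) k = binomz n k + binomz n (k - 1)"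
proof (cases "k \<le> 0")
  case True
  then show ?thesis by (cases "k = 0") (auto simp: binomz_def)
next
  case False
  then have "nat k = Suc (nat (k - 1))" by simp
  then show ?thesis using False by (simp add: binomz_def)
qed

lemma binom_diff_0 [simp]: "binom_diff k 0 = 1"
  by (simp add: binom_diff_def binomz_def)

lemma binom_diff_Suc: "1 \<le> i \<Longrightarrow> binom_diff (Suc k) i = binom_diff k i + binom_diff k (i - 1)"
  by (simp add: binom_diff_def binomz_Suc of_nat_diff algebra_simps)

lemma binom_diff_middle: "binom_diff (2 * j) (Suc j) = 0"
proof (cases "j = 0")
  case False
  have "(2 * j) choose (j - 1) = (2 * j) choose (2 * j - (j - 1))"
    by (rule binomial_symmetric) simp
  moreover have "2 * j - (j - 1) = Suc j" "nat (int (Suc j) - 2) = j - 1"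
    using False by simp_all
  ultimately show ?thesis
    unfolding binom_diff_def binomz_def by (simp del: of_nat_Suc)
qed (simp add: binom_diff_def binomz_def)

lemma binom_diff_row_len_Suc:
  assumes "row_len (Suc k) = Suc (row_len k)"
  shows "binom_diff k (row_len (Suc k)) = 0"
proof -
  have "even k" using assms unfolding row_len_def by presburger
  then obtain j where "k = 2 * j" by blast
  then show ?thesis using binom_diff_middle by (simp add: row_len_def)
qed

lemma card_staircase_words:
  assumes "1 \<le> k" "dominant_row (row_len k) T"
  shows "finite (staircase_words k T) \<and>
    int (card (staircase_words k T)) = (\<Prod>i=1..row_len k. binom_diff k i ^ row_gap (row_len k) T i)"
  using assms
proof (induction k arbitrary: T rule: nat_induct_at_least)
  case base
  show ?case
    using staircase_words_1[of T] unfolding One_nat_def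
    by (simp add: row_len_def binom_diff_def binomz_def)
next
  case (Suc k)
  let ?n = "row_len (Suc k)" and ?m = "row_len k"
  let ?Q = "PiE {1..?m} (\<lambda>i. fitting_partitions (row_gap ?n T i))"
  let ?W = "\<lambda>Q. staircase_words k (\<lambda>i. T i - int (length (Q i)))"
  have IH: "finite (?W Q) \<and>
      int (card (?W Q)) = (\<Prod>i=1..?m. binom_diff k i ^ row_gap ?m (\<lambda>i. T i - int (length (Q i))) i)"
    if "Q \<in> ?Q" for Q
    using Suc.IH dominant_row_remove[OF row_len_Suc Suc.prems that] by blast
  then have "finite (staircase_words (Suc k) T) \<and>
      int (card (staircase_words (Suc k) T)) = (\<Sum>Q\<in>?Q. int (card (?W Q)))"
    using card_staircase_words_Suc[OF Suc.hyps Suc.prems] by simp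
  moreover have "(\<Sum>Q\<in>?Q. int (card (?W Q)))
      = (\<Sum>Q\<in>?Q. \<Prod>i=1..?m. binom_diff k i ^ row_gap ?m (\<lambda>i. T i - int (length (Q i))) i)"
    using IH by simp
  moreover have "\<dots> = (\<Prod>i=1..?n. (binom_diff k i + binom_diff k (i - 1)) ^ row_gap ?n T i)"
    using row_len_Suc Suc.prems binom_diff_row_len_Suc
    by (intro sum_prod_power_row_gap_remove) auto
  moreover have "\<dots> = (\<Prod>i=1..?n. binom_diff (Suc k) i ^ row_gap ?n T i)"
    by (simp add: binom_diff_Suc)
  ultimately show ?case by simp
qed

section \<open>Patterns with partitions as staircases\<close>

definition interleave :: "(nat \<Rightarrow> 'a) \<Rightarrow> (nat \<Rightarrow> 'a) \<Rightarrow> nat \<Rightarrow> 'a" where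
  "interleave f g k = (if odd k then f (row_len k) else g (row_len k))"

lemma interleave_split: "interleave (\<lambda>j. h (2 * j - 1)) (\<lambda>j. h (2 * j)) = h"
proof
  fix k
  show "interleave (\<lambda>j. h (2 * j - 1)) (\<lambda>j. h (2 * j)) k = h k"
    by (cases "even k") (auto simp: interleave_def row_len_def elim: oddE)
qed

lemma row_len_double: "row_len (2 * r) = r" "1 \<le> r \<Longrightarrow> row_len (2 * r - 1) = r"
  by (simp_all add: row_len_def)

lemma block_interleave:
  "block k (interleave sb s k) = (if odd k then Xbar sb (row_len k) else Xpl s (row_len k))"
  by (simp add: block_def Xbar_def Xpl_def root_at_def interleave_def)

lemma ball_parity_split:
  "(\<forall>k\<in>{1..<N}. if odd k then A (row_len k) else B (row_len k)) \<longleftrightarrow>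
     (\<forall>j\<in>{1..N div 2}. A j) \<and> (\<forall>j\<in>{1..<Suc N div 2}. B j)"
proof safe
  fix j assume H: "\<forall>k\<in>{1..<N}. if odd k then A (row_len k) else B (row_len k)"
  {
    assume "j \<in> {1..N div 2}"
    then have "2 * j - 1 \<in> {1..<N}" "odd (2 * j - 1)" "row_len (2 * j - 1) = j"
      by (auto simp: row_len_def)
    then show "A j" using H by metis
  next
    assume "j \<in> {1..<Suc N div 2}"
    then have "2 * j \<in> {1..<N}" "row_len (2 * j) = j"
      by (auto simp: row_len_def)
    then show "B j" using H by (metis even_mult_iff even_numeral)
  }
next
  fix k assume A: "\<forall>j\<in>{1..N div 2}. A j" and B: "\<forall>j\<in>{1..<Suc N div 2}. B j" and k: "k \<in> {1..<N}"
  show "if odd k then A (row_len k) else B (row_len k)"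
  proof (cases "odd k")
    case True
    then have "row_len k \<in> {1..N div 2}" using k by (auto simp: row_len_def elim!: oddE)
    then show ?thesis using A True by simp
  next
    case False
    then have "row_len k \<in> {1..<Suc N div 2}" using k by (auto simp: row_len_def elim!: evenE)
    then show ?thesis using B False by simp
  qed
qed

lemma interlaced_step_bar:
  "interlaced_step j j (lam j) (eta j) (sb j) \<longleftrightarrow> interlace1 j eta lam \<and> fitsBar eta lam sb j"
  by (auto simp: interlaced_step_def interlace1_def fitsBar_def lbar_def lbar'_def lamx_def row_pad_def)

lemma interlaced_step_pl:
  "interlaced_step (Suc j) j (eta (Suc j)) (lam j) (s j) \<longleftrightarrow> interlace2 j eta lam \<and> fitsPl eta lam s j"
  by (auto simp: interlaced_step_def interlace2_def fitsPl_def lpl_def lpl'_def row_pad_def)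

lemma interlaced_step_interleave:
  "interlaced_step (row_len (Suc k)) (row_len k) (interleave eta lam (Suc k)) (interleave eta lam k)
     (interleave sb s k) \<longleftrightarrow>
   (if odd k then interlace1 (row_len k) eta lam \<and> fitsBar eta lam sb (row_len k)
    else interlace2 (row_len k) eta lam \<and> fitsPl eta lam s (row_len k))"
proof (cases "odd k")
  case True
  then have "row_len (Suc k) = row_len k" by (auto simp: row_len_def elim: oddE)
  then show ?thesis using True interlaced_step_bar by (simp add: interleave_def)
next
  case False
  then have "row_len (Suc k) = Suc (row_len k)" by (auto simp: row_len_def elim: evenE)
  then show ?thesis using False interlaced_step_pl by (simp add: interleave_def)
qed

lemma interlaced_steps_interleave:
  "(\<forall>k\<in>{1..<N}. interlaced_step (row_len (Suc k)) (row_len k) (interleave eta lam (Suc k))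
      (interleave eta lam k) (interleave sb s k)) \<longleftrightarrow>
   (\<forall>j\<in>{1..N div 2}. interlace1 j eta lam \<and> fitsBar eta lam sb j) \<and>
   (\<forall>j\<in>{1..<Suc N div 2}. interlace2 j eta lam \<and> fitsPl eta lam s j)"
  unfolding interlaced_step_interleave
  by (rule ball_parity_split[where A = "\<lambda>j. interlace1 j eta lam \<and> fitsBar eta lam sb j"
        and B = "\<lambda>j. interlace2 j eta lam \<and> fitsPl eta lam s j"])

lemma is_POP_iff_staircase:
  "is_POP r bnd eta lam sb s \<longleftrightarrow> staircase (2 * r) bnd (interleave eta lam) (interleave sb s)"
  unfolding is_POP_def is_pattern_def staircase_def interlaced_steps_interleave
  by (auto simp: interleave_def row_len_double)

lemma is_rPOP_iff_staircase:
  assumes "1 \<le> r"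
  shows "is_rPOP r bnd eta lam sb s \<longleftrightarrow> staircase (2 * r - 1) bnd (interleave eta lam) (interleave sb s)"
proof -
  have "(2 * r - 1) div 2 = r - 1" "Suc (2 * r - 1) div 2 = r" "odd (2 * r - 1)"
    "row_len (2 * r - 1) = r" "{1..r - 1} = {1..<r}"
    using assms by (auto simp: row_len_def)
  then show ?thesis
    unfolding is_rPOP_def is_rpattern_def staircase_def interlaced_steps_interleave
    by (auto simp: interleave_def)
qed

lemma wordHalf_staircase_word: "wordHalf r sb s = staircase_word (2 * r - 1) (interleave sb s)"
proof (induction r)
  case (Suc r)
  show ?case
  proof (cases "r = 0")
    case False
    then have "odd (2 * r - 1)" "row_len (2 * r - 1) = r" "Suc (2 * r - 1) = 2 * r"
      by (auto simp: row_len_def)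
    then have "staircase_word (Suc (2 * r)) (interleave sb s)
        = staircase_word (2 * r - 1) (interleave sb s) @ Xbar sb r @ Xpl s r"
      using False staircase_word_Suc[of "2 * r - 1"] staircase_word_Suc[of "2 * r"]
      by (simp add: block_interleave row_len_double)
    moreover have "wordHalf (Suc r) sb s = wordHalf r sb s @ Xbar sb r @ Xpl s r"
      using False by (simp add: wordHalf_def)
    ultimately show ?thesis using Suc.IH by simp
  qed (simp add: wordHalf_def staircase_word_def)
qed (simp add: wordHalf_def staircase_word_def)

lemma wordFull_staircase_word:
  assumes "1 \<le> r"
  shows "wordFull r sb s = staircase_word (2 * r) (interleave sb s)"
proof -
  have "odd (2 * r - 1)" "row_len (2 * r - 1) = r" "Suc (2 * r - 1) = 2 * r"
    using assms by (auto simp: row_len_def)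
  then show ?thesis
    using assms staircase_word_Suc[of "2 * r - 1"]
    by (simp add: wordFull_def wordHalf_staircase_word block_interleave)
qed

lemma staircase_words_interleave:
  "staircase_words k T = {staircase_word k (interleave sb s) | eta lam sb s.
     staircase k T (interleave eta lam) (interleave sb s)}"
  unfolding staircase_words_def by (metis interleave_split)

lemma Bfull_eq_staircase_words: "1 \<le> r \<Longrightarrow> Bfull r m = staircase_words (2 * r) (bseq r m)"
  by (simp add: Bfull_def staircase_words_interleave wordFull_staircase_word is_POP_iff_staircase)

lemma Bhalf_eq_staircase_words: "1 \<le> r \<Longrightarrow> Bhalf r n = staircase_words (2 * r - 1) (bseq r n)"
  by (simp add: Bhalf_def staircase_words_interleave wordHalf_staircase_word is_rPOP_iff_staircase)

lemma row_pad_bseq: "row_pad r (bseq r m) k = bseq r m k"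
  by (simp add: row_pad_def bseq_def)

lemma bseq_Suc: "i \<le> r \<Longrightarrow> bseq r m i = int (m i) + bseq r m (Suc i)"
  by (simp add: bseq_def sum.atLeast_Suc_atMost)

lemma dominant_row_bseq: "dominant_row r (bseq r m)"
  by (simp add: dominant_row_def row_pad_bseq bseq_Suc)

lemma row_gap_bseq: "i \<le> r \<Longrightarrow> row_gap r (bseq r m) i = m i"
  by (simp add: row_gap_def row_pad_bseq bseq_Suc)

theorem proposition3p2:
  fixes r :: nat and n m :: "nat \<Rightarrow> nat"
  assumes "r \<ge> 1"
  shows "int (card (Bhalf r n)) =
           (\<Prod>i=1..r. (binomz (2*r-1) (int i) - binomz (2*r-1) (int i - 2)) ^ n i) \<and>
         int (card (Bfull r m)) =
           (\<Prod>i=1..r. (binomz (2*r) (int i) - binomz (2*r) (int i - 2)) ^ m i)"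
proof
  have "int (card (Bhalf r n)) = (\<Prod>i=1..r. binom_diff (2 * r - 1) i ^ row_gap r (bseq r n) i)"
    using card_staircase_words[of "2 * r - 1" "bseq r n"] assms row_len_double(2)[OF assms]
    by (simp add: Bhalf_eq_staircase_words dominant_row_bseq)
  then show "int (card (Bhalf r n)) =
      (\<Prod>i=1..r. (binomz (2*r-1) (int i) - binomz (2*r-1) (int i - 2)) ^ n i)"
    by (simp add: binom_diff_def row_gap_bseq)
next
  have "int (card (Bfull r m)) = (\<Prod>i=1..r. binom_diff (2 * r) i ^ row_gap r (bseq r m) i)"
    using card_staircase_words[of "2 * r" "bseq r m"] assms
    by (simp add: Bfull_eq_staircase_words row_len_double dominant_row_bseq)
  then show "int (card (Bfull r m)) =
      (\<Prod>i=1..r. (binomz (2*r) (int i) - binomz (2*r) (int i - 2)) ^ m i)"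
    by (simp add: binom_diff_def row_gap_bseq)
qed

end
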